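(* Let $H$ be a real Hilbert space, $A$ a strictly positive selfadjoint operator on $H$ with $\lambda_1>0$ the minimum of its spectrum, $\alpha,\beta,\gamma>0$ with $\mu=\gamma-\alpha\beta\ge0$, $\eta\in\mathbb R$, $\rho>0$, and assume $$\eta^2>\frac{\mu}{\alpha\lambda_1}\qquad\text{and}\qquad\rho>\frac{2\mu\lambda_1}{\alpha\eta^2\lambda_1-\mu}.$$ For $(u,v,w,\theta)\in\mathcal H=H^1\times H^1\times H\times H$ and $\varepsilon>0$ define $$\mathsf L=\frac{\gamma}{\alpha}\|v+\alpha u\|_1^2+\|w+\alpha v\|^2-\frac{\mu}{\alpha}\|v\|_1^2+\|\theta\|^2+\rho\Big(\eta\langle\theta,v\rangle+\frac{\eta^2}{2}\|v\|_1^2+\frac12\|\theta\|_{-1}^2\Big)-\varepsilon^2\langle v-\alpha u,w+\alpha v\rangle,$$ $$\mathcal E=\frac12\big[\|v+\alpha u\|_1^2+\|w+\alpha v\|^2+\|v\|_1^2+\|\theta\|^2\big].$$ Then there exists $c>1$ such that $\frac1c\mathcal E\le\mathsf L\le c\,\mathcal E$ on $\mathcal H$ for every $\varepsilon>0$ small enough.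
   Context: $H^\sigma=\mathcal D(A^{\sigma/2})$ with $\|u\|_\sigma=\|A^{\sigma/2}u\|$ (for $\sigma<0$, the completion); $\langle\cdot,\cdot\rangle,\|\cdot\|$ are the inner product and norm of $H$. *)

theory Defs
  imports "HOL-Analysis.Analysis"
begin

definition linear_op_on :: "('a::real_vector \<Rightarrow> 'a) \<Rightarrow> 'a set \<Rightarrow> bool" where
  "linear_op_on A D \<longleftrightarrow> subspace D \<and>
     (\<forall>u\<in>D. \<forall>v\<in>D. A (u + v) = A u + A v) \<and> (\<forall>c. \<forall>u\<in>D. A (c *\<^sub>R u) = c *\<^sub>R A u)"

definition selfadjoint_op :: "('a::real_inner \<Rightarrow> 'a) \<Rightarrow> 'a set \<Rightarrow> bool" where
  "selfadjoint_op A D \<longleftrightarrow> linear_op_on A D \<and> closure D = UNIV \<and>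
     (\<forall>u\<in>D. \<forall>y\<in>D. inner (A u) y = inner u (A y)) \<and>
     (\<forall>y z. (\<forall>u\<in>D. inner (A u) y = inner u z) \<longrightarrow> y \<in> D \<and> z = A y)"

definition strictly_positive_op :: "('a::real_inner \<Rightarrow> 'a) \<Rightarrow> 'a set \<Rightarrow> bool" where
  "strictly_positive_op A D \<longleftrightarrow> (\<forall>u\<in>D. u \<noteq> 0 \<longrightarrow> inner (A u) u > 0)"

definition spectrum_op :: "('a::real_normed_vector \<Rightarrow> 'a) \<Rightarrow> 'a set \<Rightarrow> real set" where
  "spectrum_op A D = {l. \<not> (\<exists>R. bounded_linear R \<and>
       (\<forall>x. R x \<in> D \<and> A (R x) - l *\<^sub>R R x = x) \<and>
       (\<forall>u\<in>D. R (A u - l *\<^sub>R u) = u))}"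

text \<open>B is A^(-1/2): the bounded, selfadjoint, nonnegative square root of A^(-1).
  (The positive square root is unique, so B is determined by A.)\<close>
definition is_inv_sqrt :: "('a::real_inner \<Rightarrow> 'a) \<Rightarrow> 'a set \<Rightarrow> ('a \<Rightarrow> 'a) \<Rightarrow> bool" where
  "is_inv_sqrt A D B \<longleftrightarrow> bounded_linear B \<and>
     (\<forall>x y. inner (B x) y = inner x (B y)) \<and> (\<forall>x. inner (B x) x \<ge> 0) \<and>
     (\<forall>x. B (B x) \<in> D \<and> A (B (B x)) = x) \<and> (\<forall>u\<in>D. B (B (A u)) = u)"

text \<open>H^1 = D(A^(1/2)) = range of A^(-1/2); norm_1 u = |A^(1/2) u|; norm_(-1) t = |A^(-1/2) t|.\<close>
definition H1 :: "('a \<Rightarrow> 'a) \<Rightarrow> 'a set" where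
  "H1 B = range B"

definition norm1 :: "('a::real_normed_vector \<Rightarrow> 'a) \<Rightarrow> 'a \<Rightarrow> real" where
  "norm1 B u = norm (inv B u)"

definition normm1 :: "('a::real_normed_vector \<Rightarrow> 'a) \<Rightarrow> 'a \<Rightarrow> real" where
  "normm1 B t = norm (B t)"

end

theory Submission
  imports Defs
begin

(* Write u = B a and v = B b. Then |v + alpha u|_1 = |b + alpha a|, |v|_1 = |b|,
   |theta|_(-1) = |B theta| and <theta, v> = <B theta, b>, so everything becomes a statement
   about norms in H. The only spectral input is the Poincare inequality
   lam1 |B x|^2 <= |x|^2: the numerical range of the bounded symmetric operator B^2 = A^(-1)
   lies below every M for which M - A^(-1) is bounded below, i.e. below 1/lam1.
   The hypotheses on eta and rho say that the mu- and rho-terms of L, together with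
   |theta|^2 >= lam1 |B theta|^2, form a positive definite quadratic form in (|b|, |B theta|);
   by continuity this survives subtracting kappa (|b|^2 + |theta|^2) for some kappa > 0, which
   makes the epsilon-free part of L comparable to E. The epsilon^2-term is bounded by a
   multiple of E, again by the Poincare inequality, and is absorbed for small epsilon. *)

lemma norm_power2_le_quadratic_form:
  fixes S :: "'a::real_inner \<Rightarrow> 'a"
  assumes lin: "linear S" and sym: "\<And>x y. inner (S x) y = inner x (S y)"
    and nonneg: "\<And>x. 0 \<le> inner (S x) x"
    and bound: "\<And>x. norm (S x) \<le> K * norm x" and "K > 0"
  shows "(norm (S x))\<^sup>2 \<le> K * inner (S x) x"
proof -
  have "inner (S (S x)) (S x) \<le> norm (S (S x)) * norm (S x)"
    by (rule norm_cauchy_schwarz)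
  also have "\<dots> \<le> K * norm (S x) * norm (S x)"
    using bound[of "S x"] by (simp add: mult_right_mono)
  finally have SS: "inner (S (S x)) (S x) \<le> K * (norm (S x))\<^sup>2"
    by (simp add: power2_eq_square mult.assoc)
  define t where "t = - 1 / K"
  have "0 \<le> inner (S (x + t *\<^sub>R S x)) (x + t *\<^sub>R S x)"
    by (rule nonneg)
  also have "\<dots> = inner (S x) x + 2 * t * (norm (S x))\<^sup>2 + t\<^sup>2 * inner (S (S x)) (S x)"
    using sym[of "S x" x]
    by (simp add: linear_add[OF lin] linear_scale[OF lin] inner_commute algebra_simps
        power2_norm_eq_inner[symmetric, unfolded power2_eq_square] power2_eq_square)
  also have "\<dots> \<le> inner (S x) x + 2 * t * (norm (S x))\<^sup>2 + t\<^sup>2 * (K * (norm (S x))\<^sup>2)"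
    using SS by (simp add: mult_left_mono)
  also have "\<dots> = inner (S x) x - (norm (S x))\<^sup>2 / K"
    unfolding t_def using \<open>K > 0\<close> by (simp add: field_simps power2_eq_square)
  finally show ?thesis
    using \<open>K > 0\<close> by (simp add: field_simps)
qed

lemma coercive_if_bounded_below:
  fixes S :: "'a::real_inner \<Rightarrow> 'a"
  assumes lin: "bounded_linear S" and sym: "\<And>x y. inner (S x) y = inner x (S y)"
    and nonneg: "\<And>x. 0 \<le> inner (S x) x"
    and below: "\<And>x. norm x \<le> k * norm (S x)"
  shows "\<exists>\<delta>>0. \<forall>x. \<delta> * (norm x)\<^sup>2 \<le> inner (S x) x"
proof -
  obtain K where K: "\<And>x. norm (S x) \<le> norm x * K" "K > 0"
    using bounded_linear.pos_bounded[OF lin] by blast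
  have "(norm x)\<^sup>2 \<le> (k\<^sup>2 * K + 1) * inner (S x) x" for x
  proof -
    have "(norm x)\<^sup>2 \<le> k\<^sup>2 * (norm (S x))\<^sup>2"
      using power_mono[OF below[of x] norm_ge_zero] by (simp add: power_mult_distrib)
    also have "\<dots> \<le> k\<^sup>2 * (K * inner (S x) x)"
      using norm_power2_le_quadratic_form[OF bounded_linear.linear[OF lin] sym nonneg _ \<open>K > 0\<close>] K(1)
      by (simp add: mult_left_mono mult.commute)
    also have "\<dots> \<le> (k\<^sup>2 * K + 1) * inner (S x) x"
      using nonneg[of x] by (simp add: algebra_simps)
    finally show ?thesis .
  qed
  moreover have "k\<^sup>2 * K + 1 > 0"
    using \<open>K > 0\<close> by (simp add: add_nonneg_pos)
  ultimately show ?thesis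
    by (intro exI[of _ "1 / (k\<^sup>2 * K + 1)"]) (auto simp: field_simps)
qed

definition numerical_sup :: "('a::real_inner \<Rightarrow> 'a) \<Rightarrow> real" where
  "numerical_sup T = (SUP x\<in>cball 0 1. inner (T x) x)"

lemma bdd_above_numerical_range:
  assumes "bounded_linear T"
  shows "bdd_above ((\<lambda>x. inner (T x) x) ` cball 0 1)"
proof -
  obtain K where K: "\<And>x. norm (T x) \<le> norm x * K" "K > 0"
    using bounded_linear.pos_bounded[OF assms] by blast
  have "inner (T x) x \<le> K" if "norm x \<le> 1" for x
  proof -
    have "inner (T x) x \<le> norm (T x) * norm x"
      by (rule norm_cauchy_schwarz)
    also have "\<dots> \<le> K * (norm x * norm x)"
      using mult_right_mono[OF K(1)[of x] norm_ge_zero[of x]] by (simp add: ac_simps)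
    also have "\<dots> \<le> K"
      using that K(2) by (simp add: mult_left_le mult_le_one)
    finally show ?thesis .
  qed
  then show ?thesis
    by (intro bdd_aboveI2[of _ _ K]) (simp add: dist_norm)
qed

lemma quadratic_form_le_numerical_sup:
  assumes "bounded_linear T"
  shows "inner (T x) x \<le> numerical_sup T * (norm x)\<^sup>2"
proof (cases "x = 0")
  case True
  then show ?thesis
    using linear_0[OF bounded_linear.linear[OF assms]] by simp
next
  case False
  define y where "y = x /\<^sub>R norm x"
  have "inner (T y) y \<le> numerical_sup T"
    unfolding numerical_sup_def using False
    by (intro cSUP_upper bdd_above_numerical_range[OF assms]) (simp add: y_def dist_norm)
  moreover have "inner (T y) y = inner (T x) x / (norm x)\<^sup>2"
    unfolding y_def using assms by (simp add: linear_simps power2_eq_square divide_inverse)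
  ultimately show ?thesis
    using False by (simp add: field_simps)
qed

lemma numerical_sup_le:
  assumes "\<And>x. inner (T x) x \<le> M * (norm x)\<^sup>2" and "0 \<le> M"
  shows "numerical_sup T \<le> M"
  unfolding numerical_sup_def
proof (rule cSUP_least)
  fix x :: 'a
  assume "x \<in> cball 0 1"
  then have "(norm x)\<^sup>2 \<le> 1"
    by (simp add: dist_norm power_le_one)
  then show "inner (T x) x \<le> M"
    using assms(1)[of x] mult_left_le[OF _ \<open>0 \<le> M\<close>] by (meson order_trans)
qed simp

lemma quadratic_form_le_if_shifts_bounded_below:
  fixes T :: "'a::real_inner \<Rightarrow> 'a"
  assumes lin: "bounded_linear T" and sym: "\<And>x y. inner (T x) y = inner x (T y)"
    and "0 \<le> s"
    and shifts: "\<And>M. M > s \<Longrightarrow> \<exists>k. \<forall>x. norm x \<le> k * norm (M *\<^sub>R x - T x)"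
  shows "inner (T x) x \<le> s * (norm x)\<^sup>2"
proof -
  define M where "M = numerical_sup T"
  \<comment> \<open>Otherwise M - T is nonnegative and bounded below, hence coercive, which pushes the
    numerical range of T strictly below its supremum M.\<close>
  have "M \<le> s"
  proof (rule ccontr)
    assume "\<not> M \<le> s"
    then obtain k where k: "\<And>x. norm x \<le> k * norm (M *\<^sub>R x - T x)"
      using shifts[of M] by auto
    have "bounded_linear (\<lambda>x. M *\<^sub>R x - T x)"
      using lin by (intro bounded_linear_intros)
    moreover have "inner (M *\<^sub>R x - T x) y = inner x (M *\<^sub>R y - T y)" for x y
      by (simp add: inner_diff_left inner_diff_right sym)
    moreover have "0 \<le> inner (M *\<^sub>R x - T x) x" for x
      using quadratic_form_le_numerical_sup[OF lin, of x]
      by (simp add: M_def inner_diff_left power2_norm_eq_inner)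
    ultimately obtain \<delta> where "\<delta> > 0" and \<delta>: "\<And>x. \<delta> * (norm x)\<^sup>2 \<le> inner (M *\<^sub>R x - T x) x"
      using coercive_if_bounded_below k by blast
    have "inner (T x) x \<le> max 0 (M - \<delta>) * (norm x)\<^sup>2" for x
    proof -
      have "inner (T x) x = M * (norm x)\<^sup>2 - inner (M *\<^sub>R x - T x) x"
        by (simp add: inner_diff_left power2_norm_eq_inner)
      also have "\<dots> \<le> (M - \<delta>) * (norm x)\<^sup>2"
        using \<delta>[of x] by (simp add: left_diff_distrib)
      also have "\<dots> \<le> max 0 (M - \<delta>) * (norm x)\<^sup>2"
        by (intro mult_right_mono) simp_all
      finally show ?thesis .
    qed
    then have "M \<le> max 0 (M - \<delta>)"
      unfolding M_def by (rule numerical_sup_le) simp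
    with \<open>\<delta> > 0\<close> \<open>\<not> M \<le> s\<close> \<open>0 \<le> s\<close> show False
      by linarith
  qed
  then have "M * (norm x)\<^sup>2 \<le> s * (norm x)\<^sup>2"
    by (intro mult_right_mono) simp_all
  then show ?thesis
    using quadratic_form_le_numerical_sup[OF lin, of x] by (simp add: M_def)
qed

lemma inverse_shift_bounded_below:
  fixes A T :: "'a::real_normed_vector \<Rightarrow> 'a"
  assumes "l \<notin> spectrum_op A D" and "l \<noteq> 0"
    and right_inverse: "\<And>x. T x \<in> D" "\<And>x. A (T x) = x"
  shows "\<exists>k. \<forall>x. norm x \<le> k * norm ((1 / l) *\<^sub>R x - T x)"
proof -
  obtain R where "bounded_linear R" and R: "\<And>u. u \<in> D \<Longrightarrow> R (A u - l *\<^sub>R u) = u"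
    using assms(1) unfolding spectrum_op_def by blast
  obtain K where K: "\<And>y. norm (R y) \<le> norm y * K"
    using bounded_linear.bounded[OF \<open>bounded_linear R\<close>] by blast
  show ?thesis
  proof (intro exI allI)
    fix x
    define y where "y = (1 / l) *\<^sub>R x - T x"
    have "A (T x) - l *\<^sub>R T x = l *\<^sub>R y"
      using \<open>l \<noteq> 0\<close> by (simp add: y_def right_inverse algebra_simps)
    then have "T x = l *\<^sub>R R y"
      using R[OF right_inverse(1)] \<open>bounded_linear R\<close> by (metis linear_simps(5))
    have "x = l *\<^sub>R y + l *\<^sub>R T x"
      using \<open>l \<noteq> 0\<close> by (simp add: y_def algebra_simps)
    also have "\<dots> = l *\<^sub>R y + (l * l) *\<^sub>R R y"
      using \<open>T x = l *\<^sub>R R y\<close> by simp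
    finally have "norm x \<le> \<bar>l\<bar> * norm y + (l * l) * norm (R y)"
      using norm_triangle_ineq[of "l *\<^sub>R y" "(l * l) *\<^sub>R R y"] by simp
    also have "\<dots> \<le> \<bar>l\<bar> * norm y + (l * l) * (norm y * K)"
      using K[of y] by (simp add: mult_left_mono)
    also have "\<dots> = (\<bar>l\<bar> + l * l * K) * norm y"
      by (simp add: algebra_simps)
    finally show "norm x \<le> (\<bar>l\<bar> + l * l * K) * norm ((1 / l) *\<^sub>R x - T x)"
      by (simp add: y_def)
  qed
qed

lemma inv_sqrt_poincare:
  assumes B: "is_inv_sqrt A D B"
    and lower: "\<forall>l\<in>spectrum_op A D. lam1 \<le> l" and "0 < lam1"
  shows "lam1 * (norm (B x))\<^sup>2 \<le> (norm x)\<^sup>2"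
proof -
  define T where "T = (\<lambda>x. B (B x))"
  have "bounded_linear B" and B_sym: "\<And>x y. inner (B x) y = inner x (B y)"
    and T_D: "\<And>x. T x \<in> D" and A_T: "\<And>x. A (T x) = x"
    using B unfolding is_inv_sqrt_def T_def by auto
  have "bounded_linear T"
    unfolding T_def using \<open>bounded_linear B\<close> \<open>bounded_linear B\<close> by (rule bounded_linear_compose)
  have T_form: "inner (T x) x = (norm (B x))\<^sup>2" for x
    using B_sym by (simp add: T_def power2_norm_eq_inner)
  have "inner (T x) x \<le> (1 / lam1) * (norm x)\<^sup>2"
  proof (rule quadratic_form_le_if_shifts_bounded_below[OF \<open>bounded_linear T\<close>])
    show "inner (T x) y = inner x (T y)" for x y
      using B_sym by (simp add: T_def)
    fix M :: real
    assume "M > 1 / lam1"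
    moreover have "0 < 1 / lam1"
      using \<open>0 < lam1\<close> by simp
    ultimately have "0 < M"
      by linarith
    then have "0 < 1 / M" "1 / M < lam1"
      using \<open>M > 1 / lam1\<close> \<open>0 < lam1\<close> by (simp_all add: field_simps)
    then have "1 / M \<notin> spectrum_op A D"
      using lower by fastforce
    from inverse_shift_bounded_below[OF this _ T_D A_T]
    show "\<exists>k. \<forall>x. norm x \<le> k * norm (M *\<^sub>R x - T x)"
      using \<open>0 < 1 / M\<close> by simp
  qed (use \<open>0 < lam1\<close> in simp)
  then show ?thesis
    using \<open>0 < lam1\<close> by (simp add: T_form field_simps)
qed

lemma abs_inner_le_half_sum_squares:
  fixes x y :: "'a::real_inner"
  shows "\<bar>inner x y\<bar> \<le> ((norm x)\<^sup>2 + (norm y)\<^sup>2) / 2"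
proof -
  have "\<bar>inner x y\<bar> \<le> norm x * norm y"
    by (rule Cauchy_Schwarz_ineq2)
  also have "\<dots> \<le> ((norm x)\<^sup>2 + (norm y)\<^sup>2) / 2"
    using sum_squares_bound[of "norm x" "norm y"] by simp
  finally show ?thesis .
qed

lemma binary_quadratic_form_nonneg:
  fixes X Y r t s :: real
  assumes "0 < X" and "r\<^sup>2 \<le> 4 * X * Y"
  shows "0 \<le> X * t\<^sup>2 - r * t * s + Y * s\<^sup>2"
proof -
  have "4 * X * (X * t\<^sup>2 - r * t * s + Y * s\<^sup>2) = (2 * X * t - r * s)\<^sup>2 + (4 * X * Y - r\<^sup>2) * s\<^sup>2"
    by (simp add: power2_eq_square algebra_simps)
  also have "\<dots> \<ge> 0"
    using assms by simp
  finally show ?thesis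
    using \<open>0 < X\<close> by (simp add: zero_le_mult_iff)
qed

lemma coupling_lower_bound:
  fixes y b \<theta> :: "'a::real_inner"
  assumes "0 \<le> \<rho>" and "\<kappa> \<le> 1"
    and X: "0 < \<rho> * \<eta>\<^sup>2 / 2 - a - \<kappa>"
    and disc: "(\<rho> * \<eta>)\<^sup>2 \<le> 4 * (\<rho> * \<eta>\<^sup>2 / 2 - a - \<kappa>) * ((1 - \<kappa>) * lam + \<rho> / 2)"
    and poincare: "lam * (norm y)\<^sup>2 \<le> (norm \<theta>)\<^sup>2"
  shows "\<kappa> * ((norm b)\<^sup>2 + (norm \<theta>)\<^sup>2)
    \<le> - a * (norm b)\<^sup>2 + (norm \<theta>)\<^sup>2 + \<rho> * (\<eta> * inner y b + \<eta>\<^sup>2 / 2 * (norm b)\<^sup>2 + 1/2 * (norm y)\<^sup>2)"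
proof -
  have "0 \<le> (\<rho> * \<eta>\<^sup>2 / 2 - a - \<kappa>) * (norm b)\<^sup>2 - \<rho> * \<bar>\<eta>\<bar> * norm b * norm y
      + ((1 - \<kappa>) * lam + \<rho> / 2) * (norm y)\<^sup>2"
    using binary_quadratic_form_nonneg[OF X] disc by (simp add: power_mult_distrib)
  moreover have "- (\<rho> * \<bar>\<eta>\<bar> * norm b * norm y) \<le> \<rho> * (\<eta> * inner y b)"
  proof -
    have "\<bar>\<eta> * inner y b\<bar> \<le> \<bar>\<eta>\<bar> * (norm y * norm b)"
      by (simp add: abs_mult mult_left_mono Cauchy_Schwarz_ineq2)
    then have "- (\<eta> * inner y b) \<le> \<bar>\<eta>\<bar> * (norm y * norm b)"
      by (rule abs_le_D2)
    then have "\<rho> * - (\<eta> * inner y b) \<le> \<rho> * (\<bar>\<eta>\<bar> * (norm y * norm b))"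
      using \<open>0 \<le> \<rho>\<close> by (rule mult_left_mono)
    then show ?thesis
      by (simp add: ac_simps)
  qed
  moreover have "(1 - \<kappa>) * (lam * (norm y)\<^sup>2) \<le> (1 - \<kappa>) * (norm \<theta>)\<^sup>2"
    using poincare \<open>\<kappa> \<le> 1\<close> by (simp add: mult_left_mono)
  ultimately show ?thesis
    by (simp add: algebra_simps)
qed

lemma coupling_upper_bound:
  fixes y b \<theta> :: "'a::real_inner"
  assumes "0 \<le> a" and "0 \<le> \<rho>" and "0 < lam"
    and poincare: "lam * (norm y)\<^sup>2 \<le> (norm \<theta>)\<^sup>2"
  shows "- a * (norm b)\<^sup>2 + (norm \<theta>)\<^sup>2 + \<rho> * (\<eta> * inner y b + \<eta>\<^sup>2 / 2 * (norm b)\<^sup>2 + 1/2 * (norm y)\<^sup>2)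
    \<le> (1 + \<rho> * (\<bar>\<eta>\<bar> + \<eta>\<^sup>2) / 2 + \<rho> * (\<bar>\<eta>\<bar> + 1) / (2 * lam)) * ((norm b)\<^sup>2 + (norm \<theta>)\<^sup>2)"
proof -
  have "\<eta> * inner y b \<le> \<bar>\<eta>\<bar> * \<bar>inner y b\<bar>"
    by (metis abs_ge_self abs_mult)
  also have "\<dots> \<le> \<bar>\<eta>\<bar> * (((norm y)\<^sup>2 + (norm b)\<^sup>2) / 2)"
    by (intro mult_left_mono abs_inner_le_half_sum_squares) simp
  finally have "\<rho> * (\<eta> * inner y b) \<le> \<rho> * (\<bar>\<eta>\<bar> * (((norm y)\<^sup>2 + (norm b)\<^sup>2) / 2))"
    using \<open>0 \<le> \<rho>\<close> by (rule mult_left_mono)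
  then have "- a * (norm b)\<^sup>2 + (norm \<theta>)\<^sup>2 + \<rho> * (\<eta> * inner y b + \<eta>\<^sup>2 / 2 * (norm b)\<^sup>2 + 1/2 * (norm y)\<^sup>2)
      \<le> - a * (norm b)\<^sup>2 + (norm \<theta>)\<^sup>2 + \<rho> * (\<bar>\<eta>\<bar> + \<eta>\<^sup>2) / 2 * (norm b)\<^sup>2
        + \<rho> * (\<bar>\<eta>\<bar> + 1) / 2 * (norm y)\<^sup>2"
    by (simp add: algebra_simps add_divide_distrib)
  also have "\<dots> \<le> (norm \<theta>)\<^sup>2 + \<rho> * (\<bar>\<eta>\<bar> + \<eta>\<^sup>2) / 2 * (norm b)\<^sup>2
        + \<rho> * (\<bar>\<eta>\<bar> + 1) / (2 * lam) * (norm \<theta>)\<^sup>2"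
  proof -
    have "(norm y)\<^sup>2 \<le> (norm \<theta>)\<^sup>2 / lam"
      using poincare \<open>0 < lam\<close> by (simp add: pos_le_divide_eq mult.commute)
    then have "\<rho> * (\<bar>\<eta>\<bar> + 1) / 2 * (norm y)\<^sup>2 \<le> \<rho> * (\<bar>\<eta>\<bar> + 1) / 2 * ((norm \<theta>)\<^sup>2 / lam)"
      using \<open>0 \<le> \<rho>\<close> by (intro mult_left_mono) auto
    moreover have "0 \<le> a * (norm b)\<^sup>2"
      using \<open>0 \<le> a\<close> by simp
    ultimately show ?thesis
      by simp
  qed
  also have "\<dots> \<le> (1 + \<rho> * (\<bar>\<eta>\<bar> + \<eta>\<^sup>2) / 2 + \<rho> * (\<bar>\<eta>\<bar> + 1) / (2 * lam)) * ((norm b)\<^sup>2 + (norm \<theta>)\<^sup>2)"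
  proof -
    have ineq: "t + P * s + Q * t \<le> (1 + P + Q) * (s + t)" if "0 \<le> P" "0 \<le> Q" "0 \<le> s" "0 \<le> t" for P Q s t :: real
      using that mult_nonneg_nonneg[of Q s] mult_nonneg_nonneg[of P t] by (simp add: algebra_simps)
    show ?thesis
      by (rule ineq) (use assms in simp_all)
  qed
  finally show ?thesis .
qed

lemma cross_term_bound:
  fixes B :: "'a::real_inner \<Rightarrow> 'a"
  assumes "linear B" and poincare: "\<And>x. lam * (norm (B x))\<^sup>2 \<le> (norm x)\<^sup>2" and "0 < lam"
  shows "\<bar>inner (B (b - \<alpha> *\<^sub>R a)) q\<bar> \<le> (4 / lam + 1) * ((norm (b + \<alpha> *\<^sub>R a))\<^sup>2 + (norm q)\<^sup>2 + (norm b)\<^sup>2)"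
proof -
  have eq: "2 *\<^sub>R b - (b + \<alpha> *\<^sub>R a) = b - \<alpha> *\<^sub>R a"
    by (simp add: algebra_simps scaleR_2)
  have "norm (b - \<alpha> *\<^sub>R a) \<le> norm (2 *\<^sub>R b) + norm (b + \<alpha> *\<^sub>R a)"
    using norm_triangle_ineq4[of "2 *\<^sub>R b" "b + \<alpha> *\<^sub>R a"] unfolding eq .
  then have "norm (b - \<alpha> *\<^sub>R a) \<le> 2 * norm b + norm (b + \<alpha> *\<^sub>R a)"
    by simp
  then have "(norm (b - \<alpha> *\<^sub>R a))\<^sup>2 \<le> (2 * norm b + norm (b + \<alpha> *\<^sub>R a))\<^sup>2"
    by (simp add: power_mono)
  also have "\<dots> \<le> 8 * (norm b)\<^sup>2 + 2 * (norm (b + \<alpha> *\<^sub>R a))\<^sup>2"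
    using zero_le_square[of "2 * norm b - norm (b + \<alpha> *\<^sub>R a)"] by (simp add: power2_eq_square algebra_simps)
  finally have "(norm (B (b - \<alpha> *\<^sub>R a)))\<^sup>2 \<le> (8 * (norm b)\<^sup>2 + 2 * (norm (b + \<alpha> *\<^sub>R a))\<^sup>2) / lam"
    using poincare[of "b - \<alpha> *\<^sub>R a"] \<open>0 < lam\<close> by (simp add: pos_le_divide_eq mult.commute)
  then have "((norm (B (b - \<alpha> *\<^sub>R a)))\<^sup>2 + (norm q)\<^sup>2) / 2
      \<le> ((8 * (norm b)\<^sup>2 + 2 * (norm (b + \<alpha> *\<^sub>R a))\<^sup>2) / lam + (norm q)\<^sup>2) / 2"
    by (intro divide_right_mono add_right_mono) simp_all
  with abs_inner_le_half_sum_squares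
  have "\<bar>inner (B (b - \<alpha> *\<^sub>R a)) q\<bar> \<le> ((8 * (norm b)\<^sup>2 + 2 * (norm (b + \<alpha> *\<^sub>R a))\<^sup>2) / lam + (norm q)\<^sup>2) / 2"
    by (rule order_trans)
  also have "\<dots> \<le> (4 / lam + 1) * ((norm (b + \<alpha> *\<^sub>R a))\<^sup>2 + (norm q)\<^sup>2 + (norm b)\<^sup>2)"
    using \<open>0 < lam\<close> by (simp add: field_simps)
  finally show ?thesis .
qed

lemma perturbed_form_equivalence:
  fixes L I S m M C \<epsilon> c :: real
  assumes "0 \<le> S" "0 < m" and lower: "m * S \<le> L" and upper: "L \<le> M * S"
    and perturbation: "\<bar>I\<bar> \<le> C * S"
    and small: "C * \<epsilon>\<^sup>2 \<le> m / 2" "\<epsilon>\<^sup>2 \<le> 1"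
    and c: "2 / m \<le> c" "2 * (M + C) \<le> c"
  shows "1/2 * S / c \<le> L - \<epsilon>\<^sup>2 * I \<and> L - \<epsilon>\<^sup>2 * I \<le> c * (1/2 * S)"
proof
  have "\<bar>\<epsilon>\<^sup>2 * I\<bar> \<le> \<epsilon>\<^sup>2 * (C * S)"
    using perturbation by (simp add: abs_mult mult_left_mono)
  moreover have "\<epsilon>\<^sup>2 * (C * S) \<le> m / 2 * S"
    using mult_right_mono[OF small(1) \<open>0 \<le> S\<close>] by (simp add: ac_simps)
  moreover have "\<epsilon>\<^sup>2 * (C * S) \<le> C * S"
    using mult_right_mono[OF small(2), of "C * S"] perturbation by simp
  moreover have "1/2 * S / c \<le> m / 2 * S"
  proof -
    have "0 < 2 / m"
      using \<open>0 < m\<close> by simp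
    then have "0 < c"
      using c(1) by linarith
    then have "1 / c \<le> m / 2"
      using c(1) \<open>0 < m\<close> by (simp add: field_simps)
    then have "1 / c * (S / 2) \<le> m / 2 * (S / 2)"
      by (rule mult_right_mono) (use \<open>0 \<le> S\<close> in simp)
    also have "\<dots> \<le> m / 2 * S"
      using \<open>0 \<le> S\<close> \<open>0 < m\<close> by (simp add: mult_left_mono)
    finally show ?thesis
      by simp
  qed
  moreover have "(M + C) * S \<le> c * (1/2 * S)"
    using mult_right_mono[OF c(2) \<open>0 \<le> S\<close>] by (simp add: ring_distribs mult.assoc mult.left_commute)
  ultimately show "1/2 * S / c \<le> L - \<epsilon>\<^sup>2 * I" "L - \<epsilon>\<^sup>2 * I \<le> c * (1/2 * S)"
    using lower upper by (simp_all add: algebra_simps abs_le_iff)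
qed

lemma coupling_margin_exists:
  fixes \<alpha> \<mu> \<rho> \<eta> lam :: real
  assumes "0 < \<alpha>" "0 \<le> \<mu>" "0 < \<rho>" "0 < lam"
    and h1: "\<eta>\<^sup>2 > \<mu> / (\<alpha> * lam)"
    and h2: "\<rho> > 2 * \<mu> * lam / (\<alpha> * \<eta>\<^sup>2 * lam - \<mu>)"
  shows "\<exists>\<kappa>>0. \<kappa> \<le> 1/2 \<and> 0 < \<rho> * \<eta>\<^sup>2 / 2 - \<mu> / \<alpha> - \<kappa>
    \<and> (\<rho> * \<eta>)\<^sup>2 \<le> 4 * (\<rho> * \<eta>\<^sup>2 / 2 - \<mu> / \<alpha> - \<kappa>) * ((1 - \<kappa>) * lam + \<rho> / 2)"
proof -
  \<comment> \<open>At \<open>\<kappa> = 0\<close> both conditions hold strictly by h1 and h2; they persist for small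
    \<open>\<kappa> > 0\<close> by continuity.\<close>
  define X0 where "X0 = \<rho> * \<eta>\<^sup>2 / 2 - \<mu> / \<alpha>"
  define f where "f \<kappa> = 4 * (X0 - \<kappa>) * ((1 - \<kappa>) * lam + \<rho> / 2) - (\<rho> * \<eta>)\<^sup>2" for \<kappa>
  have "0 < \<alpha> * \<eta>\<^sup>2 * lam - \<mu>"
    using h1 assms(1,4) by (simp add: pos_divide_less_eq mult.commute mult.left_commute)
  then have h2': "2 * \<mu> * lam < \<rho> * (\<alpha> * \<eta>\<^sup>2 * lam - \<mu>)"
    using h2 by (simp add: pos_divide_less_eq mult.commute)
  have "f 0 = 2 / \<alpha> * (\<rho> * (\<alpha> * \<eta>\<^sup>2 * lam - \<mu>) - 2 * \<mu> * lam)"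
    unfolding f_def X0_def using \<open>0 < \<alpha>\<close> by (simp add: field_simps power2_eq_square)
  then have "0 < f 0"
    using h2' \<open>0 < \<alpha>\<close> by simp
  have "0 < X0"
  proof -
    have "2 * \<mu> * lam < \<rho> * (\<alpha> * \<eta>\<^sup>2 * lam) - \<rho> * \<mu>"
      using h2' by (simp add: right_diff_distrib)
    moreover have "0 \<le> \<rho> * \<mu>"
      using \<open>0 < \<rho>\<close> \<open>0 \<le> \<mu>\<close> by simp
    ultimately have "(2 * \<mu>) * lam < (\<rho> * \<alpha> * \<eta>\<^sup>2) * lam"
      by (simp add: ac_simps)
    then have "2 * \<mu> < \<rho> * \<alpha> * \<eta>\<^sup>2"
      using \<open>0 < lam\<close> by simp
    then show ?thesis
      unfolding X0_def using \<open>0 < \<alpha>\<close> by (simp add: field_simps)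
  qed
  have "(f \<longlongrightarrow> f 0) (at_right 0)"
    unfolding f_def by (intro tendsto_eq_intros) auto
  then have "\<forall>\<^sub>F \<kappa> in at_right 0. 0 < f \<kappa>"
    using \<open>0 < f 0\<close> by (rule order_tendstoD(1))
  moreover have "\<forall>\<^sub>F \<kappa> in at_right 0. \<kappa> < X0"
    using order_tendstoD(2)[OF tendsto_ident_at \<open>0 < X0\<close>] .
  moreover have "\<forall>\<^sub>F \<kappa> in at_right 0. \<kappa> < (1/2 :: real)"
    using order_tendstoD(2)[OF tendsto_ident_at[of "0::real" "{0<..}"], of "1/2"] by simp
  ultimately have "\<forall>\<^sub>F \<kappa> in at_right 0. 0 < f \<kappa> \<and> \<kappa> < X0 \<and> \<kappa> < 1/2"
    by eventually_elim simp
  then obtain b where "0 < b" and b: "\<And>\<kappa>. 0 < \<kappa> \<Longrightarrow> \<kappa> < b \<Longrightarrow> 0 < f \<kappa> \<and> \<kappa> < X0 \<and> \<kappa> < 1/2"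
    unfolding eventually_at_right_field by auto
  show ?thesis
    using b[of "b / 2"] \<open>0 < b\<close> by (intro exI[of _ "b / 2"]) (auto simp: f_def X0_def)
qed

lemma small_square_exists:
  fixes C r :: real
  assumes "0 < r"
  shows "\<exists>\<epsilon>\<^sub>0>0. \<forall>\<epsilon>. 0 < \<epsilon> \<longrightarrow> \<epsilon> < \<epsilon>\<^sub>0 \<longrightarrow> C * \<epsilon>\<^sup>2 < r \<and> \<epsilon>\<^sup>2 < 1"
proof -
  have square_lim: "((\<lambda>\<epsilon>. \<epsilon>\<^sup>2) \<longlongrightarrow> 0) (at_right (0::real))"
    using tendsto_power[OF tendsto_ident_at[of "0::real" "{0<..}"], of 2] by simp
  have "\<forall>\<^sub>F \<epsilon> in at_right 0. C * \<epsilon>\<^sup>2 < r"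
    using order_tendstoD(2)[OF tendsto_mult_right_zero[OF square_lim, of C] \<open>0 < r\<close>] .
  moreover have "\<forall>\<^sub>F \<epsilon> in at_right 0. \<epsilon>\<^sup>2 < (1::real)"
    using order_tendstoD(2)[OF square_lim] by simp
  ultimately have "\<forall>\<^sub>F \<epsilon> in at_right 0. C * \<epsilon>\<^sup>2 < r \<and> \<epsilon>\<^sup>2 < 1"
    by (rule eventually_conj)
  then show ?thesis
    unfolding eventually_at_right_field by auto
qed

lemma norm1_inv_sqrt:
  assumes "is_inv_sqrt A D B"
  shows "norm1 B (B x) = norm x"
proof -
  have "inj B"
    using assms unfolding is_inv_sqrt_def by (metis injI)
  then show ?thesis
    by (simp add: norm1_def)
qed

lemma lyapunov_energy_bounds:
  fixes B :: "'a::real_inner \<Rightarrow> 'a" and w \<theta> :: 'a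
  assumes B: "is_inv_sqrt A D B" and poincare: "\<And>x. lam * (norm (B x))\<^sup>2 \<le> (norm x)\<^sup>2" and "0 < lam"
    and "0 < \<alpha>" "0 < \<gamma>" "0 \<le> \<mu>" "0 < \<rho>"
    and \<kappa>: "0 < \<kappa>" "\<kappa> \<le> 1" "0 < \<rho> * \<eta>\<^sup>2 / 2 - \<mu> / \<alpha> - \<kappa>"
      "(\<rho> * \<eta>)\<^sup>2 \<le> 4 * (\<rho> * \<eta>\<^sup>2 / 2 - \<mu> / \<alpha> - \<kappa>) * ((1 - \<kappa>) * lam + \<rho> / 2)"
    and "u \<in> H1 B" "v \<in> H1 B"
  defines "L \<equiv> \<gamma> / \<alpha> * (norm1 B (v + \<alpha> *\<^sub>R u))\<^sup>2 + (norm (w + \<alpha> *\<^sub>R v))\<^sup>2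
      - \<mu> / \<alpha> * (norm1 B v)\<^sup>2 + (norm \<theta>)\<^sup>2
      + \<rho> * (\<eta> * inner \<theta> v + \<eta>\<^sup>2 / 2 * (norm1 B v)\<^sup>2 + 1/2 * (normm1 B \<theta>)\<^sup>2)"
    and "S \<equiv> (norm1 B (v + \<alpha> *\<^sub>R u))\<^sup>2 + (norm (w + \<alpha> *\<^sub>R v))\<^sup>2 + (norm1 B v)\<^sup>2 + (norm \<theta>)\<^sup>2"
  shows "min (\<gamma> / \<alpha>) \<kappa> * S \<le> L"
    and "L \<le> (\<gamma> / \<alpha> + 1 + (1 + \<rho> * (\<bar>\<eta>\<bar> + \<eta>\<^sup>2) / 2 + \<rho> * (\<bar>\<eta>\<bar> + 1) / (2 * lam))) * S"
    and "\<bar>inner (v - \<alpha> *\<^sub>R u) (w + \<alpha> *\<^sub>R v)\<bar> \<le> (4 / lam + 1) * S"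
proof -
  obtain a b where u: "u = B a" and v: "v = B b"
    using \<open>u \<in> H1 B\<close> \<open>v \<in> H1 B\<close> unfolding H1_def by blast
  have "linear B" and B_sym: "\<And>x y. inner (B x) y = inner x (B y)"
    using B unfolding is_inv_sqrt_def by (auto dest: bounded_linear.linear)
  have v_u: "v + \<alpha> *\<^sub>R u = B (b + \<alpha> *\<^sub>R a)" "v - \<alpha> *\<^sub>R u = B (b - \<alpha> *\<^sub>R a)"
    unfolding u v using \<open>linear B\<close> by (simp_all add: linear_add linear_diff linear_scale)
  define P q C where "P = norm (b + \<alpha> *\<^sub>R a)" and "q = norm (w + \<alpha> *\<^sub>R v)"
    and "C = - (\<mu> / \<alpha>) * (norm b)\<^sup>2 + (norm \<theta>)\<^sup>2
      + \<rho> * (\<eta> * inner (B \<theta>) b + \<eta>\<^sup>2 / 2 * (norm b)\<^sup>2 + 1/2 * (norm (B \<theta>))\<^sup>2)"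
  have L: "L = \<gamma> / \<alpha> * P\<^sup>2 + q\<^sup>2 + C" and S: "S = P\<^sup>2 + q\<^sup>2 + ((norm b)\<^sup>2 + (norm \<theta>)\<^sup>2)"
    unfolding L_def S_def P_def q_def C_def v_u(1) normm1_def
    by (simp_all add: v B_sym norm1_inv_sqrt[OF B])
  have "\<kappa> * ((norm b)\<^sup>2 + (norm \<theta>)\<^sup>2) \<le> C"
    unfolding C_def using \<open>0 < \<rho>\<close> \<kappa> poincare by (intro coupling_lower_bound) simp_all
  then have "\<gamma> / \<alpha> * P\<^sup>2 + q\<^sup>2 + \<kappa> * ((norm b)\<^sup>2 + (norm \<theta>)\<^sup>2) \<le> L"
    unfolding L by simp
  moreover have "min (\<gamma> / \<alpha>) \<kappa> * S \<le> \<gamma> / \<alpha> * P\<^sup>2 + q\<^sup>2 + \<kappa> * ((norm b)\<^sup>2 + (norm \<theta>)\<^sup>2)"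
  proof -
    have "0 \<le> min (\<gamma> / \<alpha>) \<kappa>" "min (\<gamma> / \<alpha>) \<kappa> \<le> 1"
      using \<open>0 < \<gamma>\<close> \<open>0 < \<alpha>\<close> \<kappa>(1,2) by auto
    then have "min (\<gamma> / \<alpha>) \<kappa> * q\<^sup>2 \<le> q\<^sup>2"
      by (intro mult_left_le_one_le) simp_all
    moreover have "min (\<gamma> / \<alpha>) \<kappa> * P\<^sup>2 \<le> \<gamma> / \<alpha> * P\<^sup>2"
      "min (\<gamma> / \<alpha>) \<kappa> * ((norm b)\<^sup>2 + (norm \<theta>)\<^sup>2) \<le> \<kappa> * ((norm b)\<^sup>2 + (norm \<theta>)\<^sup>2)"
      by (intro mult_right_mono; simp)+
    ultimately show ?thesis
      unfolding S by (simp add: distrib_left)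
  qed
  ultimately show "min (\<gamma> / \<alpha>) \<kappa> * S \<le> L"
    by linarith
  define K where "K = 1 + \<rho> * (\<bar>\<eta>\<bar> + \<eta>\<^sup>2) / 2 + \<rho> * (\<bar>\<eta>\<bar> + 1) / (2 * lam)"
  have "C \<le> K * ((norm b)\<^sup>2 + (norm \<theta>)\<^sup>2)"
    unfolding C_def K_def using \<open>0 \<le> \<mu>\<close> \<open>0 < \<alpha>\<close> \<open>0 < \<rho>\<close> \<open>0 < lam\<close> poincare
    by (intro coupling_upper_bound) simp_all
  moreover have "0 \<le> K"
    unfolding K_def using \<open>0 < \<rho>\<close> \<open>0 < lam\<close> by simp
  then have "\<gamma> / \<alpha> * P\<^sup>2 + q\<^sup>2 + K * ((norm b)\<^sup>2 + (norm \<theta>)\<^sup>2) \<le> (\<gamma> / \<alpha> + 1 + K) * S"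
    unfolding S using \<open>0 < \<gamma>\<close> \<open>0 < \<alpha>\<close>
    by (simp add: distrib_left distrib_right add_mono mult_right_mono)
  ultimately show "L \<le> (\<gamma> / \<alpha> + 1 + K) * S"
    unfolding L by linarith
  have "(4 / lam + 1) * (P\<^sup>2 + q\<^sup>2 + (norm b)\<^sup>2) \<le> (4 / lam + 1) * S"
    unfolding S using \<open>0 < lam\<close> by (intro mult_left_mono) simp_all
  then show "\<bar>inner (v - \<alpha> *\<^sub>R u) (w + \<alpha> *\<^sub>R v)\<bar> \<le> (4 / lam + 1) * S"
    using cross_term_bound[OF \<open>linear B\<close> poincare \<open>0 < lam\<close>, of b \<alpha> a "w + \<alpha> *\<^sub>R v"]
    unfolding v_u(2) P_def q_def by linarith
qed

theorem lemma7p5: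
  fixes A B :: "'a::{real_inner,complete_space} \<Rightarrow> 'a" and D :: "'a set"
    and lam1 \<alpha> \<beta> \<gamma> \<mu> \<eta> \<rho> :: real
  assumes sa: "selfadjoint_op A D" and pos: "strictly_positive_op A D"
    and lam: "lam1 \<in> spectrum_op A D" "\<forall>l\<in>spectrum_op A D. lam1 \<le> l" "lam1 > 0"
    and B: "is_inv_sqrt A D B"
    and par: "\<alpha> > 0" "\<beta> > 0" "\<gamma> > 0" "\<mu> = \<gamma> - \<alpha> * \<beta>" "\<mu> \<ge> 0" "\<rho> > 0"
    and h1: "\<eta>\<^sup>2 > \<mu> / (\<alpha> * lam1)"
    and h2: "\<rho> > 2 * \<mu> * lam1 / (\<alpha> * \<eta>\<^sup>2 * lam1 - \<mu>)"
  shows "\<exists>c>1. \<exists>\<epsilon>\<^sub>0>0. \<forall>\<epsilon>. 0 < \<epsilon> \<and> \<epsilon> < \<epsilon>\<^sub>0 \<longrightarrow>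
    (\<forall>u\<in>H1 B. \<forall>v\<in>H1 B. \<forall>w \<theta>.
      (let L = \<gamma> / \<alpha> * (norm1 B (v + \<alpha> *\<^sub>R u))\<^sup>2 + (norm (w + \<alpha> *\<^sub>R v))\<^sup>2
               - \<mu> / \<alpha> * (norm1 B v)\<^sup>2 + (norm \<theta>)\<^sup>2
               + \<rho> * (\<eta> * inner \<theta> v + \<eta>\<^sup>2 / 2 * (norm1 B v)\<^sup>2 + 1/2 * (normm1 B \<theta>)\<^sup>2)
               - \<epsilon>\<^sup>2 * inner (v - \<alpha> *\<^sub>R u) (w + \<alpha> *\<^sub>R v);
           E = 1/2 * ((norm1 B (v + \<alpha> *\<^sub>R u))\<^sup>2 + (norm (w + \<alpha> *\<^sub>R v))\<^sup>2
               + (norm1 B v)\<^sup>2 + (norm \<theta>)\<^sup>2)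
       in E / c \<le> L \<and> L \<le> c * E))"
proof -
  have poincare: "\<And>x. lam1 * (norm (B x))\<^sup>2 \<le> (norm x)\<^sup>2"
    using inv_sqrt_poincare[OF B lam(2,3)] .
  obtain \<kappa> where \<kappa>: "0 < \<kappa>" "\<kappa> \<le> 1/2" "0 < \<rho> * \<eta>\<^sup>2 / 2 - \<mu> / \<alpha> - \<kappa>"
    "(\<rho> * \<eta>)\<^sup>2 \<le> 4 * (\<rho> * \<eta>\<^sup>2 / 2 - \<mu> / \<alpha> - \<kappa>) * ((1 - \<kappa>) * lam1 + \<rho> / 2)"
    using coupling_margin_exists[OF par(1,5,6) lam(3) h1 h2] by blast
  define m where "m = min (\<gamma> / \<alpha>) \<kappa>"
  define M where "M = \<gamma> / \<alpha> + 1 + (1 + \<rho> * (\<bar>\<eta>\<bar> + \<eta>\<^sup>2) / 2 + \<rho> * (\<bar>\<eta>\<bar> + 1) / (2 * lam1))"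
  define C where "C = 4 / lam1 + 1"
  define c where "c = max 2 (max (2 / m) (2 * (M + C)))"
  have "0 < m"
    unfolding m_def using par(1,3) \<kappa>(1) by simp
  obtain \<epsilon>\<^sub>0 where "0 < \<epsilon>\<^sub>0" and small: "\<And>\<epsilon>. 0 < \<epsilon> \<Longrightarrow> \<epsilon> < \<epsilon>\<^sub>0 \<Longrightarrow> C * \<epsilon>\<^sup>2 < m / 2 \<and> \<epsilon>\<^sup>2 < 1"
    using small_square_exists[of "m / 2" C] \<open>0 < m\<close> by auto
  show ?thesis
  proof (rule exI[of _ c], intro conjI exI[of _ "\<epsilon>\<^sub>0"] allI impI ballI, goal_cases)
    case 1
    show ?case
      unfolding c_def by simp
  next
    case 2
    show ?case
      by fact
  next
    case (3 \<epsilon> u v w \<theta>)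
    note bounds = lyapunov_energy_bounds[OF B poincare lam(3) par(1,3,5,6) \<kappa>(1) _ \<kappa>(3,4) 3(2,3),
        of w \<theta>, folded m_def M_def C_def]
    show ?case
      unfolding Let_def
      by (rule perturbed_form_equivalence[OF _ \<open>0 < m\<close> bounds])
        (use small[of \<epsilon>] 3(1) \<kappa>(2) in \<open>auto simp: c_def\<close>)
  qed
qed

end
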